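(* Let $f$ and $g$ be multiplicative functions such that $S_f(x)\ll x^\alpha$, and suppose that $\hat{\mathbb{D}}_{\beta,k}(f,g)<\infty$ for some $\beta$ and some positive integer $k$. Suppose additionally that $f(n)=o(n^\delta)$ and $g(n)=o(n^\delta)$ for some $\delta>0$. Let $h$ be defined by $g=f*h$. If $\sigma>1/(k+1)+\delta$ is such that $\sigma\ge\max(\alpha,\beta)$, then there is $Y>0$ such that if $\hat H_Y(\sigma)$ is convergent, then $S_g(x)\ll x^\sigma$.
   Context: $S_f(x):=\sum_{n\le x}f(n)$. For multiplicative $f,g$ (not necessarily bounded), $\hat{\mathbb{D}}_{\beta,k}(f,g):=\sum_p\sum_{j=1}^k\frac{|f(p^j)-g(p^j)|}{p^{j\beta}}$ (sum over primes); $f,g$ are called $(\beta,k)$-strongly pretentious if this is finite. $(f*h)(n)=\sum_{dm=n}f(d)h(m)$. $\hat H_Y(\sigma):=\sum_{p\le Y}\sum_{k=1}^\infty\frac{|h(p^k)|}{p^{k\sigma}}$. *)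

theory Defs
  imports "HOL-Analysis.Analysis" "HOL-Library.Landau_Symbols"
begin

definition multiplicative :: "(nat \<Rightarrow> complex) \<Rightarrow> bool" where
  "multiplicative f \<longleftrightarrow> f 1 = 1 \<and> (\<forall>m n. coprime m n \<longrightarrow> f (m * n) = f m * f n)"

definition S :: "(nat \<Rightarrow> complex) \<Rightarrow> real \<Rightarrow> complex" where
  "S f x = (\<Sum>n\<in>{1..nat \<lfloor>x\<rfloor>}. f n)"

definition Dterm :: "real \<Rightarrow> nat \<Rightarrow> (nat \<Rightarrow> complex) \<Rightarrow> (nat \<Rightarrow> complex) \<Rightarrow> nat \<Rightarrow> real" where
  "Dterm \<beta> k f g p =
     (if prime p then (\<Sum>j=1..k. norm (f (p ^ j) - g (p ^ j)) / real p powr (real j * \<beta>)) else 0)"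

text \<open>f, g are (beta,k)-strongly pretentious: hat-D_{beta,k}(f,g) < infinity (nonnegative series).\<close>
definition strongly_pretentious :: "real \<Rightarrow> nat \<Rightarrow> (nat \<Rightarrow> complex) \<Rightarrow> (nat \<Rightarrow> complex) \<Rightarrow> bool" where
  "strongly_pretentious \<beta> k f g \<longleftrightarrow> summable (Dterm \<beta> k f g)"

definition dirichlet_conv :: "(nat \<Rightarrow> complex) \<Rightarrow> (nat \<Rightarrow> complex) \<Rightarrow> nat \<Rightarrow> complex" where
  "dirichlet_conv f h n = (\<Sum>d | d dvd n. f d * h (n div d))"

text \<open>hat-H_Y(sigma) = sum_{p <= Y} sum_{k >= 1} |h(p^k)|/p^{k sigma} is convergent:
  finitely many primes, so convergence means each inner series converges.\<close>
definition hatH_convergent :: "(nat \<Rightarrow> complex) \<Rightarrow> real \<Rightarrow> real \<Rightarrow> bool" where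
  "hatH_convergent h Y \<sigma> \<longleftrightarrow>
     (\<forall>p. prime p \<and> real p \<le> Y \<longrightarrow>
        summable (\<lambda>j. norm (h (p ^ Suc j)) / real p powr (real (Suc j) * \<sigma>)))"

end

theory Submission
  imports Defs
begin

text \<open>Then h is multiplicative and S_g(x) = sum_{m <= x} h(m) S_f(x/m); as
  S_f(y) << y^sigma for y >= 1, it suffices that the partial sums of |h(n)|/n^sigma are bounded.
  By the Euler product they are at most exp(sum_p b(p)) for any summable majorant b(p) of the local
  sums sum_{j >= 1} |h(p^j)|/p^(j sigma). Choose Y such that |f(n)|, |g(n)| <= n^delta and
  p^(delta - sigma) <= 1/4 beyond Y. For p <= Y the local sum converges because hat-H_Y(sigma) does.
  For p > Y the recursion h(p^j) = g(p^j) - f(p^j) - sum_{0<i<j} f(p^i) h(p^(j-i)) bounds the terms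
  with j <= k by j! times the p-summand of hat-D_{beta,k}(f, g), and every term by
  (2 p^(delta - sigma))^j, whose tail over j > k is summable over p since (k + 1)(sigma - delta) > 1.\<close>

section \<open>Multiplicativity of the Dirichlet quotient\<close>

lemma gcd_mult_coprime_divisors:
  fixes m n a b :: nat
  assumes "coprime m n" "a dvd m" "b dvd n"
  shows "gcd (a * b) m = a"
  by (metis assms coprime_mult_right_iff dvd_mult_div_cancel
      gcd_mult_left_right_cancel gcd_nat.order_iff)

lemma bij_betw_divisors_mult_coprime:
  fixes m n :: nat
  assumes cop: "coprime m n"
  shows "bij_betw (\<lambda>(a, b). a * b) ({a. a dvd m} \<times> {b. b dvd n}) {d. d dvd m * n}"
proof (rule bij_betw_byWitness[where f' = "\<lambda>d. (gcd d m, gcd d n)"])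
  have cop': "coprime n m"
    using cop by (simp add: coprime_commute)
  show "\<forall>x\<in>{a. a dvd m} \<times> {b. b dvd n}. (gcd (case x of (a, b) \<Rightarrow> a * b) m,
          gcd (case x of (a, b) \<Rightarrow> a * b) n) = x"
  proof (clarsimp)
    fix a b assume "a dvd m" "b dvd n"
    then show "gcd (a * b) m = a \<and> gcd (a * b) n = b"
      using gcd_mult_coprime_divisors[OF cop, of a b] gcd_mult_coprime_divisors[OF cop', of b a]
      by (simp add: mult.commute)
  qed
  show "\<forall>d\<in>{d. d dvd m * n}. (case (gcd d m, gcd d n) of (a, b) \<Rightarrow> a * b) = d"
  proof
    fix d assume "d \<in> {d. d dvd m * n}"
    then obtain a b where "d = a * b" "a dvd m" "b dvd n"
      using division_decomp by blast
    then show "(case (gcd d m, gcd d n) of (a, b) \<Rightarrow> a * b) = d"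
      using gcd_mult_coprime_divisors[OF cop, of a b] gcd_mult_coprime_divisors[OF cop', of b a]
      by (simp add: mult.commute)
  qed
qed (auto intro: mult_dvd_mono)

lemma dirichlet_conv_mult_coprime:
  assumes mf: "multiplicative f" and cop: "coprime m n"
  shows "dirichlet_conv f h (m * n)
           = (\<Sum>(a, b)\<in>{a. a dvd m} \<times> {b. b dvd n}. f a * f b * h (m div a * (n div b)))"
proof -
  have "dirichlet_conv f h (m * n) = (\<Sum>(a, b)\<in>{a. a dvd m} \<times> {b. b dvd n}. f (a * b) * h (m * n div (a * b)))"
    unfolding dirichlet_conv_def
    using sum.reindex_bij_betw[OF bij_betw_divisors_mult_coprime[OF cop],
        of "\<lambda>d. f d * h (m * n div d)"]
    by (simp add: case_prod_beta')
  also have "\<dots> = (\<Sum>(a, b)\<in>{a. a dvd m} \<times> {b. b dvd n}. f a * f b * h (m div a * (n div b)))"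
  proof (rule sum.cong[OF refl], clarify)
    fix a b assume ab: "a dvd m" "b dvd n"
    then have "coprime a b"
      using cop coprime_divisors by blast
    then show "f (a * b) * h (m * n div (a * b)) = f a * f b * h (m div a * (n div b))"
      using mf ab by (simp add: multiplicative_def div_mult_div_if_dvd)
  qed
  finally show ?thesis .
qed

lemma dirichlet_conv_mult_dirichlet_conv:
  assumes "m > 0" "n > 0"
  shows "dirichlet_conv f h m * dirichlet_conv f' h' n
           = (\<Sum>(a, b)\<in>{a. a dvd m} \<times> {b. b dvd n}. f a * f' b * (h (m div a) * h' (n div b)))"
  unfolding dirichlet_conv_def
  by (simp add: sum_product sum.cartesian_product algebra_simps)

lemma cofactors_coprime_less:
  fixes m n a b :: nat
  assumes cop: "coprime m n" and "m > 0" "n > 0" and ab: "a dvd m" "b dvd n" "(a, b) \<noteq> (1, 1)"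
  shows "coprime (m div a) (n div b)" and "m div a > 0" and "n div b > 0"
    and "m div a * (n div b) < m * n"
proof -
  show "coprime (m div a) (n div b)"
    using coprime_divisors[OF _ _ cop] ab by (metis dvd_div_mult_self dvd_triv_left)
  show "m div a > 0" "n div b > 0"
    using ab \<open>m > 0\<close> \<open>n > 0\<close> by (auto intro!: Nat.gr0I)
  moreover have "a > 0" "b > 0"
    using ab \<open>m > 0\<close> \<open>n > 0\<close> by (auto intro!: Nat.gr0I)
  then have "a * b > 1"
  proof (cases "a = 1")
    case False
    moreover have "a \<le> a * b"
      using \<open>b > 0\<close> by simp
    ultimately show ?thesis
      using \<open>a > 0\<close> by linarith
  qed (use ab(3) in simp)
  moreover have "m * n = (m div a * (n div b)) * (a * b)"
    using ab by (metis dvd_div_mult_self mult.assoc mult.left_commute)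
  ultimately show "m div a * (n div b) < m * n"
    by simp
qed

lemma dirichlet_quotient_mult_coprime:
  assumes mf: "multiplicative f" and mg: "multiplicative g"
    and conv: "\<forall>n>0. g n = dirichlet_conv f h n"
    and "coprime m n" "m > 0" "n > 0"
  shows "h (m * n) = h m * h n"
  using assms(4-6)
proof (induction "m * n" arbitrary: m n rule: less_induct)
  case (less m n)
  \<comment> \<open>Expanding \<open>g (m n) = g m g n\<close> over pairs of divisors, every term but the one for
    \<open>(1, 1)\<close> agrees by the induction hypothesis.\<close>
  define D where "D = {a. a dvd m} \<times> {b. b dvd n}"
  define T where "T = (\<lambda>(a, b). f a * f b * h (m div a * (n div b)))"
  define U where "U = (\<lambda>(a, b). f a * f b * (h (m div a) * h (n div b)))"
  have finD: "finite D" and oneD: "(1, 1) \<in> D"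
    unfolding D_def using less.prems by auto
  have "T x = U x" if x: "x \<in> D - {(1, 1)}" for x
  proof -
    obtain a b where ab: "x = (a, b)" "a dvd m" "b dvd n" "(a, b) \<noteq> (1, 1)"
      using x unfolding D_def by (cases x) auto
    note cofactors = cofactors_coprime_less[OF less.prems ab(2-4)]
    show ?thesis
      using less.hyps[OF cofactors(4) cofactors(1-3)] unfolding T_def U_def ab(1) by simp
  qed
  then have "sum T (D - {(1, 1)}) = sum U (D - {(1, 1)})"
    by (rule sum.cong[OF refl])
  moreover have "sum T D = sum U D"
  proof -
    have "sum T D = g (m * n)"
      using conv less.prems dirichlet_conv_mult_coprime[OF mf less.prems(1)]
      unfolding D_def T_def by simp
    also have "\<dots> = g m * g n"
      using mg less.prems(1) by (simp add: multiplicative_def)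
    also have "\<dots> = sum U D"
      using conv less.prems dirichlet_conv_mult_dirichlet_conv[of m n f h f h]
      unfolding D_def U_def by simp
    finally show ?thesis .
  qed
  ultimately have "T (1, 1) = U (1, 1)"
    using finD oneD by (simp add: sum.remove)
  then show ?case
    unfolding T_def U_def using mf by (simp add: multiplicative_def)
qed

lemma multiplicative_dirichlet_quotient:
  assumes mf: "multiplicative f" and mg: "multiplicative g"
    and conv: "\<forall>n>0. g n = dirichlet_conv f h n"
  shows "multiplicative h"
proof -
  have h1: "h 1 = 1"
    using conv[rule_format, of 1] mf mg by (simp add: dirichlet_conv_def multiplicative_def)
  have "h (m * n) = h m * h n" if "coprime m n" for m n
  proof (cases "m = 0 \<or> n = 0")
    case True
    \<comment> \<open>\<open>coprime 0 n\<close> forces \<open>n = 1\<close>\<close>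
    then show ?thesis
      using that h1 by auto
  next
    case False
    then show ?thesis
      using dirichlet_quotient_mult_coprime[OF mf mg conv that] by simp
  qed
  then show ?thesis
    using h1 by (simp add: multiplicative_def)
qed

section \<open>Summatory functions of Dirichlet convolutions\<close>

lemma sum_divisors_swap:
  fixes F :: "nat \<Rightarrow> nat \<Rightarrow> 'a::comm_monoid_add"
  shows "(\<Sum>n=1..N. \<Sum>d | d dvd n. F d (n div d)) = (\<Sum>m=1..N. \<Sum>e=1..N div m. F e m)"
proof -
  have "(\<Sum>n=1..N. \<Sum>d | d dvd n. F d (n div d)) = (\<Sum>(n, d)\<in>(SIGMA n:{1..N}. {d. d dvd n}). F d (n div d))"
    by (rule sum.Sigma) auto
  also have "\<dots> = (\<Sum>(m, e)\<in>(SIGMA m:{1..N}. {1..N div m}). F e m)"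
  proof (rule sum.reindex_bij_witness[where i = "\<lambda>(m, e). (e * m, e)" and j = "\<lambda>(n, d). (n div d, d)"])
    fix y assume "y \<in> (SIGMA n:{1..N}. {d. d dvd n})"
    then obtain n d where y: "y = (n, d)" "1 \<le> n" "n \<le> N" "d dvd n"
      by auto
    then have "d > 0" "n div d > 0" "d * (n div d) = n"
      by (auto intro!: Nat.gr0I)
    moreover have "n div d \<le> N"
      using y by (meson div_le_dividend le_trans)
    ultimately show "(\<lambda>(n, d). (n div d, d)) y \<in> (SIGMA m:{1..N}. {1..N div m})"
      using y less_eq_div_iff_mult_less_eq[of "n div d" d N] by auto
    show "(\<lambda>(m, e). (e * m, e)) ((\<lambda>(n, d). (n div d, d)) y) = y"
      using y by auto
    show "(case (\<lambda>(n, d). (n div d, d)) y of (m, e) \<Rightarrow> F e m) = (case y of (n, d) \<Rightarrow> F d (n div d))"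
      using y by auto
  next
    fix x assume "x \<in> (SIGMA m:{1..N}. {1..N div m})"
    then obtain m e where x: "x = (m, e)" "1 \<le> m" "1 \<le> e" "e \<le> N div m"
      by auto
    then have "e * m \<le> N"
      using less_eq_div_iff_mult_less_eq[of m e N] by simp
    then show "(\<lambda>(m, e). (e * m, e)) x \<in> (SIGMA n:{1..N}. {d. d dvd n})"
      using x by auto
    show "(\<lambda>(n, d). (n div d, d)) ((\<lambda>(m, e). (e * m, e)) x) = x"
      using x by auto
  qed
  also have "\<dots> = (\<Sum>m=1..N. \<Sum>e=1..N div m. F e m)"
    by (rule sum.Sigma[symmetric]) auto
  finally show ?thesis .
qed

lemma S_dirichlet_conv:
  assumes conv: "\<forall>n>0. g n = dirichlet_conv f h n" and "x \<ge> 0"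
  shows "S g x = (\<Sum>m=1..nat \<lfloor>x\<rfloor>. h m * S f (x / real m))"
proof -
  define N where "N = nat \<lfloor>x\<rfloor>"
  have floor_div: "nat \<lfloor>x / real m\<rfloor> = N div m" for m
    using floor_divide_real_eq_div[of "int m" x] \<open>x \<ge> 0\<close>
    unfolding N_def by (cases "m = 0") (simp_all add: nat_div_distrib)
  have "S g x = (\<Sum>n=1..N. \<Sum>d | d dvd n. f d * h (n div d))"
    unfolding S_def N_def using conv by (intro sum.cong) (auto simp: dirichlet_conv_def)
  also have "\<dots> = (\<Sum>m=1..N. \<Sum>e=1..N div m. f e * h m)"
    by (rule sum_divisors_swap)
  also have "\<dots> = (\<Sum>m=1..N. h m * S f (x / real m))"
    unfolding S_def floor_div by (simp add: sum_distrib_left mult.commute)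
  finally show ?thesis
    unfolding N_def .
qed

lemma S_le_powr_of_bigo:
  assumes "(\<lambda>x. S f x) \<in> O[at_top](\<lambda>x. complex_of_real (x powr \<alpha>))" and "\<alpha> \<le> \<sigma>" and "\<sigma> \<ge> 0"
  obtains C where "\<And>y. y \<ge> 1 \<Longrightarrow> norm (S f y) \<le> C * y powr \<sigma>"
proof -
  obtain c where c: "c > 0" and "\<forall>\<^sub>F x in at_top. norm (S f x) \<le> c * x powr \<alpha>"
    using landau_o.bigE[OF assms(1)] by auto
  then obtain x0 where x0: "\<And>x. x \<ge> x0 \<Longrightarrow> norm (S f x) \<le> c * x powr \<alpha>"
    by (auto simp: eventually_at_top_linorder)
  define M where "M = (\<Sum>n=1..nat \<lfloor>x0\<rfloor>. norm (f n))"
  have M0: "M \<ge> 0"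
    unfolding M_def by (intro sum_nonneg) simp
  have "norm (S f y) \<le> (c + M) * y powr \<sigma>" if "y \<ge> 1" for y
  proof (cases "y \<ge> x0")
    case True
    have "norm (S f y) \<le> c * y powr \<alpha>"
      using x0[OF True] .
    also have "\<dots> \<le> (c + M) * y powr \<sigma>"
      using c M0 \<open>y \<ge> 1\<close> \<open>\<alpha> \<le> \<sigma>\<close> by (intro mult_mono powr_mono) auto
    finally show ?thesis .
  next
    case False
    have "norm (S f y) \<le> (\<Sum>n=1..nat \<lfloor>y\<rfloor>. norm (f n))"
      unfolding S_def by (rule norm_sum)
    also have "\<dots> \<le> M"
    proof -
      have "nat \<lfloor>y\<rfloor> \<le> nat \<lfloor>x0\<rfloor>"
        using False by (intro nat_mono floor_mono) simp
      then show ?thesis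
        unfolding M_def by (intro sum_mono2) auto
    qed
    also have "\<dots> = M * 1"
      by simp
    also have "\<dots> \<le> (c + M) * y powr \<sigma>"
      using c M0 ge_one_powr_ge_zero[OF \<open>y \<ge> 1\<close> \<open>\<sigma> \<ge> 0\<close>] by (intro mult_mono) auto
    finally show ?thesis .
  qed
  then show ?thesis
    using that by blast
qed

lemma bigo_S_dirichlet_conv:
  assumes conv: "\<forall>n>0. g n = dirichlet_conv f h n"
    and S_le: "\<And>y. y \<ge> 1 \<Longrightarrow> norm (S f y) \<le> C * y powr \<sigma>"
    and bounded: "\<And>N. (\<Sum>n=1..N. norm (h n) / real n powr \<sigma>) \<le> B"
  shows "(\<lambda>x. S g x) \<in> O[at_top](\<lambda>x. complex_of_real (x powr \<sigma>))"
proof (rule bigoI[where c = "C * B"])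
  have C0: "C \<ge> 0"
    using order_trans[OF norm_ge_zero S_le[of 1]] by simp
  show "\<forall>\<^sub>F x in at_top. norm (S g x) \<le> C * B * norm (complex_of_real (x powr \<sigma>))"
    using eventually_ge_at_top[of "1::real"]
  proof eventually_elim
    case (elim x)
    define N where "N = nat \<lfloor>x\<rfloor>"
    have x_div: "x / real m \<ge> 1" if "m \<in> {1..N}" for m
    proof -
      have "real m \<le> x"
        using that elim unfolding N_def by (simp add: le_nat_iff le_floor_iff)
      then show ?thesis
        using that by simp
    qed
    have "S g x = (\<Sum>m=1..N. h m * S f (x / real m))"
      unfolding N_def using S_dirichlet_conv[OF conv] elim by simp
    then have "norm (S g x) \<le> (\<Sum>m=1..N. norm (h m) * norm (S f (x / real m)))"
      by (simp add: order.trans[OF norm_sum] norm_mult)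
    also have "\<dots> \<le> (\<Sum>m=1..N. norm (h m) * (C * (x / real m) powr \<sigma>))"
      by (intro sum_mono mult_left_mono S_le x_div) auto
    also have "\<dots> = C * x powr \<sigma> * (\<Sum>m=1..N. norm (h m) / real m powr \<sigma>)"
      unfolding sum_distrib_left using elim by (intro sum.cong refl) (simp add: powr_divide)
    also have "\<dots> \<le> C * x powr \<sigma> * B"
      using C0 by (intro mult_left_mono bounded) auto
    finally show ?case
      by (simp add: mult_ac)
  qed
qed

section \<open>Euler product bound\<close>

lemma prime_power_cofactor_smooth:
  fixes q m N :: nat
  assumes q: "prime q" and m: "m \<in> {1..N}" "prime_factors m \<subseteq> insert q P"
  defines "r \<equiv> m div q ^ multiplicity q m"
  shows "multiplicity q m \<le> N" and "\<not> q dvd r" and "r \<in> {m\<in>{1..N}. prime_factors m \<subseteq> P}"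
proof -
  have decomp: "m = q ^ multiplicity q m * r"
    unfolding r_def by (simp add: multiplicity_dvd)
  have "multiplicity q m < q ^ multiplicity q m"
    using prime_gt_1_nat[OF q] less_exp[of "multiplicity q m"] power_mono[of 2 q "multiplicity q m"]
    by linarith
  also have "q ^ multiplicity q m \<le> m"
    using m by (intro dvd_imp_le multiplicity_dvd) auto
  finally show "multiplicity q m \<le> N"
    using m by simp
  show q_ndvd: "\<not> q dvd r"
    using q m unfolding r_def by (intro multiplicity_decompose) auto
  have "r > 0"
    using m decomp by (auto intro!: Nat.gr0I)
  moreover have "r \<le> m"
    unfolding r_def by simp
  moreover have "prime_factors r \<subseteq> P"
  proof
    fix p assume p: "p \<in> prime_factors r"
    have "r dvd m"
      using decomp by (metis dvd_triv_right)
    then have "p \<in> prime_factors m"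
      using p m by (auto simp: in_prime_factors_iff intro: dvd_trans)
    moreover have "p \<noteq> q"
      using p q_ndvd by auto
    ultimately show "p \<in> P"
      using m by auto
  qed
  ultimately show "r \<in> {m\<in>{1..N}. prime_factors m \<subseteq> P}"
    using m by auto
qed

lemma sum_smooth_insert_prime_le:
  fixes a :: "nat \<Rightarrow> real"
  assumes nonneg: "\<And>n. a n \<ge> 0"
    and mult: "\<And>m n. coprime m n \<Longrightarrow> m > 0 \<Longrightarrow> n > 0 \<Longrightarrow> a (m * n) = a m * a n"
    and q: "prime q"
  shows "sum a {m\<in>{1..N}. prime_factors m \<subseteq> insert q P}
           \<le> (\<Sum>j\<le>N. a (q ^ j)) * sum a {m\<in>{1..N}. prime_factors m \<subseteq> P}"
proof -
  define A' where "A' = {m\<in>{1..N}. prime_factors m \<subseteq> insert q P}"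
  define A where "A = {m\<in>{1..N}. prime_factors m \<subseteq> P}"
  define v where "v m = multiplicity q m" for m
  define r where "r m = m div q ^ v m" for m
  note cofactor = prime_power_cofactor_smooth[OF q, where N = N and P = P, folded v_def, folded r_def]
  have decomp: "m = q ^ v m * r m" for m
    unfolding r_def v_def by (simp add: multiplicity_dvd)
  have "inj_on (\<lambda>m. (v m, r m)) A'"
  proof (rule inj_onI)
    fix x y assume "(v x, r x) = (v y, r y)"
    then show "x = y"
      using decomp[of x] decomp[of y] by simp
  qed
  moreover have img: "(\<lambda>m. (v m, r m)) ` A' \<subseteq> {..N} \<times> A"
  proof (rule image_subsetI)
    fix m assume "m \<in> A'"
    then show "(v m, r m) \<in> {..N} \<times> A"
      using cofactor[of m] unfolding A'_def A_def by simp
  qed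
  moreover have "a m = a (q ^ v m) * a (r m)" if "m \<in> A'" for m
  proof -
    have "coprime (q ^ v m) (r m)"
      using cofactor(2)[of m] that q unfolding A'_def
      by (simp add: coprime_power_left_iff prime_imp_coprime)
    moreover have "r m > 0"
      using cofactor(3)[of m] that unfolding A'_def by auto
    ultimately show ?thesis
      using mult prime_gt_0_nat[OF q] decomp[of m] by (metis zero_less_power)
  qed
  ultimately have "sum a A' = (\<Sum>(j, r)\<in>(\<lambda>m. (v m, r m)) ` A'. a (q ^ j) * a r)"
    by (simp add: sum.reindex)
  also have "\<dots> \<le> (\<Sum>(j, r)\<in>{..N} \<times> A. a (q ^ j) * a r)"
    by (rule sum_mono2) (use img in \<open>auto simp: A_def nonneg\<close>)
  also have "\<dots> = (\<Sum>j\<le>N. a (q ^ j)) * sum a A"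
    by (simp add: sum_product sum.cartesian_product)
  finally show ?thesis
    unfolding A'_def A_def .
qed

lemma sum_smooth_le_euler_product:
  fixes a :: "nat \<Rightarrow> real"
  assumes nonneg: "\<And>n. a n \<ge> 0" and one: "a 1 = 1"
    and mult: "\<And>m n. coprime m n \<Longrightarrow> m > 0 \<Longrightarrow> n > 0 \<Longrightarrow> a (m * n) = a m * a n"
    and "finite P" and "\<forall>p\<in>P. prime p"
  shows "sum a {m\<in>{1..N}. prime_factors m \<subseteq> P} \<le> (\<Prod>p\<in>P. \<Sum>j\<le>N. a (p ^ j))"
  using assms(4,5)
proof (induction P rule: finite_induct)
  case empty
  have sub: "{m\<in>{1..N}. prime_factors m \<subseteq> {}} \<subseteq> {1}"
    by (auto simp: prime_factorization_empty_iff)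
  have "sum a {m\<in>{1..N}. prime_factors m \<subseteq> {}} \<le> sum a {1}"
    by (rule sum_mono2[OF _ sub]) (auto simp: nonneg)
  then show ?case
    using one by simp
next
  case (insert q P)
  have "sum a {m\<in>{1..N}. prime_factors m \<subseteq> insert q P}
          \<le> (\<Sum>j\<le>N. a (q ^ j)) * sum a {m\<in>{1..N}. prime_factors m \<subseteq> P}"
    using insert.prems by (intro sum_smooth_insert_prime_le nonneg mult) auto
  also have "\<dots> \<le> (\<Sum>j\<le>N. a (q ^ j)) * (\<Prod>p\<in>P. \<Sum>j\<le>N. a (p ^ j))"
    using insert by (intro mult_left_mono sum_nonneg nonneg) auto
  finally show ?case
    using insert.hyps by simp
qed

lemma sum_multiplicative_le_exp_suminf:
  fixes a b :: "nat \<Rightarrow> real"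
  assumes nonneg: "\<And>n. a n \<ge> 0" and one: "a 1 = 1"
    and mult: "\<And>m n. coprime m n \<Longrightarrow> m > 0 \<Longrightarrow> n > 0 \<Longrightarrow> a (m * n) = a m * a n"
    and local_bound: "\<And>p M. prime p \<Longrightarrow> (\<Sum>j=1..M. a (p ^ j)) \<le> b p"
    and b_nonneg: "\<And>n. b n \<ge> 0" and "summable b"
  shows "sum a {1..N} \<le> exp (suminf b)"
proof -
  let ?P = "{p. prime p \<and> p \<le> N}"
  have "prime_factors m \<subseteq> ?P" if "m \<in> {1..N}" for m
    using that by (auto simp: in_prime_factors_iff intro: order.trans[OF dvd_imp_le])
  then have smooth: "{m\<in>{1..N}. prime_factors m \<subseteq> ?P} = {1..N}"
    by blast
  have "sum a {m\<in>{1..N}. prime_factors m \<subseteq> ?P} \<le> (\<Prod>p\<in>?P. \<Sum>j\<le>N. a (p ^ j))"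
    by (rule sum_smooth_le_euler_product[where a = a, OF nonneg one mult]) auto
  then have "sum a {1..N} \<le> (\<Prod>p\<in>?P. \<Sum>j\<le>N. a (p ^ j))"
    by (simp only: smooth)
  also have "\<dots> \<le> (\<Prod>p\<in>?P. exp (b p))"
  proof (rule prod_mono, clarify)
    fix p :: nat assume "prime p"
    have "(\<Sum>j\<le>N. a (p ^ j)) = 1 + (\<Sum>j=1..N. a (p ^ j))"
      using one by (simp add: atMost_atLeast0 sum.atLeast_Suc_atMost)
    also have "\<dots> \<le> exp (b p)"
      using local_bound[OF \<open>prime p\<close>, of N] exp_ge_add_one_self[of "b p"] by linarith
    finally show "0 \<le> (\<Sum>j\<le>N. a (p ^ j)) \<and> (\<Sum>j\<le>N. a (p ^ j)) \<le> exp (b p)"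
      by (simp add: nonneg sum_nonneg)
  qed
  also have "\<dots> = exp (sum b ?P)"
    by (simp add: exp_sum)
  also have "\<dots> \<le> exp (suminf b)"
    using sum_le_suminf[OF \<open>summable b\<close>] b_nonneg by simp
  finally show ?thesis .
qed

section \<open>Local factors at a prime\<close>

lemma cauchy_quotient_eq:
  fixes F G H :: "nat \<Rightarrow> 'a::comm_ring_1"
  assumes "F 0 = 1" and "G j = (\<Sum>i\<le>j. F i * H (j - i))"
  shows "H j = G j - (\<Sum>i=1..j. F i * H (j - i))"
  using assms by (simp add: atMost_atLeast0 sum.atLeast_Suc_atMost)

lemma norm_cauchy_quotient_le_geometric:
  fixes F G H :: "nat \<Rightarrow> 'a::{real_normed_field}" and r :: real
  assumes r: "r > 0" and F0: "F 0 = 1" and H0: "H 0 = 1"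
    and conv: "\<And>j. G j = (\<Sum>i\<le>j. F i * H (j - i))"
    and F_le: "\<And>i. i \<ge> 1 \<Longrightarrow> norm (F i) \<le> r ^ i"
    and G_le: "\<And>i. i \<ge> 1 \<Longrightarrow> norm (G i) \<le> r ^ i"
  shows "norm (H j) \<le> (2 * r) ^ j"
proof (induction j rule: less_induct)
  case (less j)
  show ?case
  proof (cases "j = 0")
    case True
    then show ?thesis
      using H0 by simp
  next
    case False
    have "norm (H j) = norm (G j - (\<Sum>i=1..j. F i * H (j - i)))"
      using cauchy_quotient_eq[where F = F and G = G and H = H and j = j, OF F0 conv] by simp
    also have "\<dots> \<le> norm (G j) + norm (\<Sum>i=1..j. F i * H (j - i))"
      by (rule norm_triangle_ineq4)
    also have "\<dots> \<le> norm (G j) + (\<Sum>i=1..j. norm (F i) * norm (H (j - i)))"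
      by (intro add_left_mono order.trans[OF norm_sum]) (simp add: norm_mult)
    also have "\<dots> \<le> r ^ j + (\<Sum>i=1..j. r ^ i * (2 * r) ^ (j - i))"
      by (intro add_mono sum_mono mult_mono) (use less F_le G_le False r in auto)
    also have "(\<Sum>i=1..j. r ^ i * (2 * r) ^ (j - i)) = (2 * r) ^ j * (\<Sum>i=1..j. (1 / 2) ^ i)"
      unfolding sum_distrib_left
    proof (rule sum.cong[OF refl])
      fix i assume "i \<in> {1..j}"
      then have "(2 * r) ^ j = (2 * r) ^ i * (2 * r) ^ (j - i)"
        by (metis le_add_diff_inverse atLeastAtMost_iff power_add)
      then show "r ^ i * (2 * r) ^ (j - i) = (2 * r) ^ j * (1 / 2) ^ i"
        by (simp add: power_mult_distrib power_divide)
    qed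
    also have "(\<Sum>i=1..j. (1 / 2 :: real) ^ i) = 1 - (1 / 2) ^ j"
      by (induction j) (auto simp: sum.cl_ivl_Suc)
    also have "r ^ j + (2 * r) ^ j * (1 - (1 / 2) ^ j) = (2 * r) ^ j"
      by (simp add: power_mult_distrib field_simps)
    finally show ?thesis .
  qed
qed

lemma one_add_mult_fact_le_fact:
  assumes "j \<ge> 1"
  shows "1 + real (j - 1) * fact (j - 1) \<le> (fact j :: real)"
proof -
  have "1 + real (j - 1) * fact (j - 1) = 1 + real j * fact (j - 1) - (fact (j - 1) :: real)"
    using assms by (simp add: of_nat_diff algebra_simps)
  also have "\<dots> \<le> real j * fact (j - 1)"
    using fact_ge_1[of "j - 1", where 'a = real] by linarith
  also have "\<dots> = fact j"
    using assms by (simp add: fact_reduce[of j])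
  finally show ?thesis .
qed

lemma norm_cauchy_quotient_le_fact_sum:
  fixes F G H :: "nat \<Rightarrow> 'a::{real_normed_field}" and s :: real
  assumes s: "s > 0" and F0: "F 0 = 1" and H0: "H 0 = 1"
    and conv: "\<And>j. G j = (\<Sum>i\<le>j. F i * H (j - i))"
    and F_le: "\<And>i. i \<ge> 1 \<Longrightarrow> norm (F i) \<le> s ^ i"
    and "j \<ge> 1"
  shows "norm (H j) / s ^ j \<le> fact j * (\<Sum>i=1..j. norm (G i - F i) / s ^ i)"
  using \<open>j \<ge> 1\<close>
proof (induction j rule: less_induct)
  case (less j)
  define E where "E j = (\<Sum>i=1..j. norm (G i - F i) / s ^ i)" for j
  have E_nonneg: "E i \<ge> 0" for i
    unfolding E_def using s by (intro sum_nonneg) simp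
  have E_mono: "E i \<le> E j" if "i \<le> j" for i j
    unfolding E_def using that s by (intro sum_mono2) auto
  have "{1..j} = insert j {1..<j}"
    using \<open>j \<ge> 1\<close> by auto
  then have "H j = (G j - F j) - (\<Sum>i=1..<j. F i * H (j - i))"
    using cauchy_quotient_eq[where F = F and G = G and H = H and j = j, OF F0 conv] H0 by simp
  then have "norm (H j) \<le> norm (G j - F j) + norm (\<Sum>i=1..<j. F i * H (j - i))"
    by (simp add: norm_triangle_ineq4)
  also have "\<dots> \<le> norm (G j - F j) + (\<Sum>i=1..<j. norm (F i) * norm (H (j - i)))"
    by (intro add_left_mono order.trans[OF norm_sum]) (simp add: norm_mult)
  finally have "norm (H j) / s ^ j
      \<le> (norm (G j - F j) + (\<Sum>i=1..<j. norm (F i) * norm (H (j - i)))) / s ^ j"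
    using s by (simp add: divide_right_mono)
  also have "\<dots> = norm (G j - F j) / s ^ j
      + (\<Sum>i=1..<j. (norm (F i) / s ^ i) * (norm (H (j - i)) / s ^ (j - i)))"
    unfolding add_divide_distrib sum_divide_distrib
  proof (intro arg_cong2[where f = "(+)"] refl sum.cong)
    fix i assume "i \<in> {1..<j}"
    then have "s ^ j = s ^ i * s ^ (j - i)"
      by (metis le_add_diff_inverse atLeastLessThan_iff less_imp_le power_add)
    then show "norm (F i) * norm (H (j - i)) / s ^ j = (norm (F i) / s ^ i) * (norm (H (j - i)) / s ^ (j - i))"
      by simp
  qed
  also have "\<dots> \<le> E j + (\<Sum>i=1..<j. 1 * (fact (j - 1) * E j))"
  proof (rule add_mono)
    show "norm (G j - F j) / s ^ j \<le> E j"
      unfolding E_def using \<open>j \<ge> 1\<close> s by (intro member_le_sum) auto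
  next
    show "(\<Sum>i=1..<j. (norm (F i) / s ^ i) * (norm (H (j - i)) / s ^ (j - i)))
          \<le> (\<Sum>i=1..<j. 1 * (fact (j - 1) * E j))"
    proof (rule sum_mono)
      fix i assume i: "i \<in> {1..<j}"
      have "norm (H (j - i)) / s ^ (j - i) \<le> fact (j - i) * E (j - i)"
        unfolding E_def using i by (intro less.IH) auto
      also have "\<dots> \<le> fact (j - 1) * E j"
        using i E_nonneg by (intro mult_mono fact_mono E_mono) auto
      finally show "(norm (F i) / s ^ i) * (norm (H (j - i)) / s ^ (j - i)) \<le> 1 * (fact (j - 1) * E j)"
        using F_le[of i] i s by (intro mult_mono) auto
    qed
  qed
  also have "\<dots> = (1 + real (j - 1) * fact (j - 1)) * E j"
    by (simp add: algebra_simps)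
  also have "1 + real (j - 1) * fact (j - 1) \<le> (fact j :: real)"
    using \<open>j \<ge> 1\<close> by (rule one_add_mult_fact_le_fact)
  finally show ?case
    unfolding E_def using E_nonneg[of j] by (simp add: mult_right_mono E_def)
qed

lemma powr_of_nat_power:
  assumes "p > 0"
  shows "real (p ^ j) powr x = (real p powr x) ^ j"
  using assms by (simp add: powr_power powr_realpow[symmetric] powr_powr mult.commute)

lemma sum_power_tail_le:
  fixes q :: real
  assumes "0 \<le> q" "q \<le> 1 / 2"
  shows "(\<Sum>j=m..N. q ^ j) \<le> 2 * q ^ m"
proof (cases "N < m")
  case False
  then have "(\<Sum>j=m..N. q ^ j) = (q ^ m - q ^ Suc N) / (1 - q)"
    using assms by (simp add: sum_gp)
  also have "\<dots> \<le> q ^ m / (1 / 2)"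
    using assms by (intro frac_le) auto
  finally show ?thesis
    by simp
qed (use assms in simp)

lemma dirichlet_conv_prime_power:
  assumes "prime p"
  shows "dirichlet_conv f h (p ^ j) = (\<Sum>i\<le>j. f (p ^ i) * h (p ^ (j - i)))"
proof -
  have p1: "p > 1"
    using assms prime_gt_1_nat by blast
  have "{d. d dvd p ^ j} = (\<lambda>i. p ^ i) ` {..j}"
    using divides_primepow_nat[OF assms] by auto
  moreover have "inj_on (\<lambda>i. p ^ i) {..j}"
    using p1 by (auto simp: inj_on_def power_inject_exp)
  ultimately have "dirichlet_conv f h (p ^ j) = (\<Sum>i\<le>j. f (p ^ i) * h (p ^ j div p ^ i))"
    unfolding dirichlet_conv_def by (simp add: sum.reindex)
  also have "\<dots> = (\<Sum>i\<le>j. f (p ^ i) * h (p ^ (j - i)))"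
    using p1 by (intro sum.cong refl) (simp add: power_diff)
  finally show ?thesis .
qed

lemma sum_prime_power_diff_le_Dterm:
  assumes p: "prime p" and "\<beta> \<le> \<sigma>" and "j \<le> k"
  shows "(\<Sum>i=1..j. norm (g (p ^ i) - f (p ^ i)) / (real p powr \<sigma>) ^ i) \<le> Dterm \<beta> k f g p"
proof -
  have p1: "real p \<ge> 1"
    using prime_ge_1_nat[OF p] by simp
  have "(\<Sum>i=1..j. norm (g (p ^ i) - f (p ^ i)) / (real p powr \<sigma>) ^ i)
      \<le> (\<Sum>i=1..k. norm (g (p ^ i) - f (p ^ i)) / (real p powr \<sigma>) ^ i)"
    using \<open>j \<le> k\<close> by (intro sum_mono2) auto
  also have "\<dots> \<le> (\<Sum>i=1..k. norm (f (p ^ i) - g (p ^ i)) / real p powr (real i * \<beta>))"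
  proof (rule sum_mono)
    fix i
    have "real p powr (real i * \<beta>) \<le> (real p powr \<sigma>) ^ i"
      using p1 \<open>\<beta> \<le> \<sigma>\<close> powr_power[of "real p" \<sigma> i]
      by (auto intro!: powr_mono mult_left_mono)
    then show "norm (g (p ^ i) - f (p ^ i)) / (real p powr \<sigma>) ^ i
        \<le> norm (f (p ^ i) - g (p ^ i)) / real p powr (real i * \<beta>)"
      using p1 by (simp add: norm_minus_commute frac_le)
  qed
  also have "\<dots> = Dterm \<beta> k f g p"
    unfolding Dterm_def using p by simp
  finally show ?thesis .
qed

lemma sum_prime_power_quotient_le:
  fixes f g h :: "nat \<Rightarrow> complex"
  assumes f1: "f 1 = 1" and h1: "h 1 = 1"
    and conv: "\<forall>n>0. g n = dirichlet_conv f h n" and p: "prime p"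
    and large: "\<And>n. real n > Y \<Longrightarrow> norm (f n) \<le> real n powr \<delta> \<and> norm (g n) \<le> real n powr \<delta>"
    and "real p > Y" and small: "2 * real p powr (\<delta> - \<sigma>) \<le> 1 / 2" and "\<delta> \<le> \<sigma>" and "\<beta> \<le> \<sigma>"
  shows "(\<Sum>j=1..N. norm (h (p ^ j)) / real (p ^ j) powr \<sigma>)
           \<le> real k * fact k * Dterm \<beta> k f g p + 2 * (2 * real p powr (\<delta> - \<sigma>)) ^ (k + 1)"
proof -
  define F G H where "F i = f (p ^ i)" and "G i = g (p ^ i)" and "H i = h (p ^ i)" for i
  define r s q where "r = real p powr \<delta>" and "s = real p powr \<sigma>" and "q = 2 * real p powr (\<delta> - \<sigma>)"
  have p0: "p > 0"
    using prime_gt_0_nat[OF p] .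
  have r0: "r > 0" and s0: "s > 0" and q0: "q \<ge> 0"
    unfolding r_def s_def q_def using p0 by auto
  have q_eq: "q = 2 * r / s"
    unfolding q_def r_def s_def by (simp add: powr_diff)
  have F0: "F 0 = 1" and H0: "H 0 = 1"
    unfolding F_def H_def using f1 h1 by simp_all
  have cauchy: "G j = (\<Sum>i\<le>j. F i * H (j - i))" for j
    unfolding F_def G_def H_def using conv dirichlet_conv_prime_power[OF p] p0 by simp
  have "real p \<le> real (p ^ i)" if "i \<ge> 1" for i
    using that p0 by (simp only: of_nat_le_iff self_le_power)
  then have "real (p ^ i) > Y" if "i \<ge> 1" for i
    using \<open>real p > Y\<close> that by (meson order_less_le_trans)
  then have F_le_r: "norm (F i) \<le> r ^ i" and G_le_r: "norm (G i) \<le> r ^ i" if "i \<ge> 1" for i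
    using large that unfolding F_def G_def r_def powr_of_nat_power[OF p0, symmetric] by blast+
  have "r \<le> s"
    unfolding r_def s_def using prime_ge_1_nat[OF p] \<open>\<delta> \<le> \<sigma>\<close> by (intro powr_mono) auto
  then have F_le_s: "norm (F i) \<le> s ^ i" if "i \<ge> 1" for i
    using F_le_r[OF that] power_mono[of r s i] r0 by linarith
  have normalized: "norm (h (p ^ j)) / real (p ^ j) powr \<sigma> = norm (H j) / s ^ j" for j
    unfolding H_def s_def powr_of_nat_power[OF p0] ..
  have "(\<Sum>j=1..N. norm (H j) / s ^ j) \<le> (\<Sum>j\<in>{1..k} \<union> {Suc k..N}. norm (H j) / s ^ j)"
    using s0 by (intro sum_mono2) auto
  also have "\<dots> = (\<Sum>j=1..k. norm (H j) / s ^ j) + (\<Sum>j=Suc k..N. norm (H j) / s ^ j)"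
    by (intro sum.union_disjoint) auto
  also have "(\<Sum>j=1..k. norm (H j) / s ^ j) \<le> (\<Sum>j=1..k. fact k * Dterm \<beta> k f g p)"
  proof (rule sum_mono)
    fix j assume j: "j \<in> {1..k}"
    have "norm (H j) / s ^ j \<le> fact j * (\<Sum>i=1..j. norm (G i - F i) / s ^ i)"
      using j by (intro norm_cauchy_quotient_le_fact_sum[OF s0 F0 H0 cauchy F_le_s]) auto
    also have "\<dots> \<le> fact k * Dterm \<beta> k f g p"
      unfolding F_def G_def s_def
      using j s0 sum_prime_power_diff_le_Dterm[OF p \<open>\<beta> \<le> \<sigma>\<close>, of j k g f]
      by (intro mult_mono fact_mono) (auto intro!: sum_nonneg)
    finally show "norm (H j) / s ^ j \<le> fact k * Dterm \<beta> k f g p" .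
  qed
  also have "(\<Sum>j=Suc k..N. norm (H j) / s ^ j) \<le> (\<Sum>j=Suc k..N. q ^ j)"
  proof (rule sum_mono)
    fix j
    have "norm (H j) / s ^ j \<le> (2 * r) ^ j / s ^ j"
      using norm_cauchy_quotient_le_geometric[OF r0 F0 H0 cauchy F_le_r G_le_r] s0
      by (intro divide_right_mono) auto
    then show "norm (H j) / s ^ j \<le> q ^ j"
      unfolding q_eq by (simp add: power_divide)
  qed
  also have "\<dots> \<le> 2 * q ^ Suc k"
    using q0 small unfolding q_def by (intro sum_power_tail_le) auto
  finally show ?thesis
    unfolding normalized q_def by simp
qed

section \<open>Partial sums of |h(n)| / n^sigma\<close>

lemma eventually_le_powr_of_smallo:
  assumes "(\<lambda>n. norm (f n)) \<in> o(\<lambda>n. real n powr \<delta>)"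
  shows "eventually (\<lambda>n. norm (f n) \<le> real n powr \<delta>) at_top"
  using landau_o.smallD[OF assms, of 1] by simp

lemma eventually_powr_le_quarter:
  assumes "\<delta> < \<sigma>"
  shows "eventually (\<lambda>n::nat. 2 * real n powr (\<delta> - \<sigma>) \<le> 1 / 2) at_top"
proof -
  have "((\<lambda>n. real n powr (\<delta> - \<sigma>)) \<longlongrightarrow> 0) at_top"
    using assms by (intro tendsto_neg_powr filterlim_real_sequentially) simp
  then have "eventually (\<lambda>n. real n powr (\<delta> - \<sigma>) < 1 / 4) at_top"
    by (rule order_tendstoD) simp
  then show ?thesis
    by eventually_elim simp
qed

lemma summable_local_majorant:
  assumes "strongly_pretentious \<beta> k f g" and "real (k + 1) * (\<sigma> - \<delta>) > 1"
  shows "summable (\<lambda>p. real k * fact k * Dterm \<beta> k f g p + 2 * (2 * real p powr (\<delta> - \<sigma>)) ^ (k + 1))"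
proof -
  have eq: "(2 * real p powr (\<delta> - \<sigma>)) ^ (k + 1) = 2 ^ (k + 1) * real p powr (real (k + 1) * (\<delta> - \<sigma>))" for p
    by (cases "p = 0") (simp_all add: power_mult_distrib powr_power distrib_right powr_add)
  have "summable (\<lambda>p. real p powr (real (k + 1) * (\<delta> - \<sigma>)))"
    using assms(2) by (subst summable_real_powr_iff) (simp add: algebra_simps)
  then have "summable (\<lambda>p. real k * fact k * Dterm \<beta> k f g p
      + 2 * (2 ^ (k + 1) * real p powr (real (k + 1) * (\<delta> - \<sigma>))))"
    using assms(1) unfolding strongly_pretentious_def by (intro summable_add summable_mult)
  then show ?thesis
    by (simp only: eq)
qed

lemma bounded_sums_of_hatH_convergent:
  fixes f g h :: "nat \<Rightarrow> complex"
  assumes mf: "multiplicative f" and mh: "multiplicative h"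
    and conv: "\<forall>n>0. g n = dirichlet_conv f h n" and pretentious: "strongly_pretentious \<beta> k f g"
    and "\<delta> \<le> \<sigma>" and "\<beta> \<le> \<sigma>" and "real (k + 1) * (\<sigma> - \<delta>) > 1"
    and large: "\<And>n. real n > Y \<Longrightarrow> norm (f n) \<le> real n powr \<delta> \<and> norm (g n) \<le> real n powr \<delta>"
    and small: "\<And>p. real p > Y \<Longrightarrow> 2 * real p powr (\<delta> - \<sigma>) \<le> 1 / 2"
    and hc: "hatH_convergent h Y \<sigma>"
  shows "\<exists>B. \<forall>N. (\<Sum>n=1..N. norm (h n) / real n powr \<sigma>) \<le> B"
proof -
  define a where "a n = norm (h n) / real n powr \<sigma>" for n
  define c where "c p = real k * fact k * Dterm \<beta> k f g p + 2 * (2 * real p powr (\<delta> - \<sigma>)) ^ (k + 1)" for p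
  define b where "b p = (if prime p then if real p \<le> Y then (\<Sum>j. a (p ^ Suc j)) else c p else 0)" for p
  have a_pow: "a (p ^ j) = norm (h (p ^ j)) / real p powr (real j * \<sigma>)" if "p > 0" for p j
    unfolding a_def powr_of_nat_power[OF that] using that by (simp add: powr_power)
  have a_nonneg: "a n \<ge> 0" for n
    unfolding a_def by simp
  have h1: "h 1 = 1" and f1: "f 1 = 1"
    using mh mf by (simp_all add: multiplicative_def)
  have c_nonneg: "c p \<ge> 0" for p
    unfolding c_def Dterm_def by (auto intro!: add_nonneg_nonneg mult_nonneg_nonneg sum_nonneg)
  have summable_small: "summable (\<lambda>j. a (p ^ Suc j))" if "prime p" "real p \<le> Y" for p
  proof -
    have "summable (\<lambda>j. norm (h (p ^ Suc j)) / real p powr (real (Suc j) * \<sigma>))"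
      using hc that unfolding hatH_convergent_def by blast
    then show ?thesis
      by (simp only: a_pow[OF prime_gt_0_nat[OF that(1)]])
  qed
  have local_bound: "(\<Sum>j=1..N. a (p ^ j)) \<le> b p" if p: "prime p" for p N
  proof (cases "real p \<le> Y")
    case True
    have "(\<Sum>j=1..N. a (p ^ j)) = (\<Sum>j<N. a (p ^ Suc j))"
      using sum.atLeast1_atMost_eq[of "\<lambda>j. a (p ^ j)" N] by simp
    also have "\<dots> \<le> (\<Sum>j. a (p ^ Suc j))"
      using summable_small[OF p True] by (rule sum_le_suminf) (auto simp: a_nonneg)
    finally show ?thesis
      unfolding b_def using p True by simp
  next
    case False
    have "(\<Sum>j=1..N. a (p ^ j)) \<le> c p"
      unfolding a_def c_def
      by (rule sum_prime_power_quotient_le[OF f1 h1 conv p large]) (use False small[of p] assms(5,6) in auto)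
    then show ?thesis
      unfolding b_def using p False by simp
  qed
  have b_nonneg: "b p \<ge> 0" for p
    unfolding b_def using summable_small c_nonneg a_nonneg by (auto intro!: suminf_nonneg)
  have "summable b"
  proof (rule summable_comparison_test'[OF summable_local_majorant[OF pretentious assms(7)]])
    fix p assume "p \<ge> nat \<lceil>Y\<rceil> + 1"
    then have "\<not> real p \<le> Y"
      by linarith
    then show "norm (b p) \<le> real k * fact k * Dterm \<beta> k f g p + 2 * (2 * real p powr (\<delta> - \<sigma>)) ^ (k + 1)"
      using c_nonneg unfolding b_def c_def by auto
  qed
  have "sum a {1..N} \<le> exp (suminf b)" for N
  proof (rule sum_multiplicative_le_exp_suminf[OF _ _ _ local_bound b_nonneg \<open>summable b\<close>])
    show "a 1 = 1"
      unfolding a_def using h1 by simp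
    show "a (m * n) = a m * a n" if "coprime m n" "m > 0" "n > 0" for m n
      using mh that unfolding a_def multiplicative_def by (simp add: norm_mult powr_mult)
  qed (rule a_nonneg)
  then show ?thesis
    unfolding a_def by blast
qed

lemma threshold_for_local_bounds:
  fixes f g :: "nat \<Rightarrow> complex"
  assumes "(\<lambda>n. norm (f n)) \<in> o(\<lambda>n. real n powr \<delta>)" and "(\<lambda>n. norm (g n)) \<in> o(\<lambda>n. real n powr \<delta>)"
    and "\<delta> < \<sigma>"
  obtains Y :: real where "Y > 0"
    and "\<And>n. real n > Y \<Longrightarrow> norm (f n) \<le> real n powr \<delta> \<and> norm (g n) \<le> real n powr \<delta>"
    and "\<And>p. real p > Y \<Longrightarrow> 2 * real p powr (\<delta> - \<sigma>) \<le> 1 / 2"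
proof -
  have "eventually (\<lambda>n. (norm (f n) \<le> real n powr \<delta> \<and> norm (g n) \<le> real n powr \<delta>)
      \<and> 2 * real n powr (\<delta> - \<sigma>) \<le> 1 / 2) at_top"
    using eventually_le_powr_of_smallo[OF assms(1)] eventually_le_powr_of_smallo[OF assms(2)]
      eventually_powr_le_quarter[OF assms(3)]
    by (intro eventually_conj)
  then obtain N where "\<And>n. n \<ge> N \<Longrightarrow> (norm (f n) \<le> real n powr \<delta> \<and> norm (g n) \<le> real n powr \<delta>)
      \<and> 2 * real n powr (\<delta> - \<sigma>) \<le> 1 / 2"
    unfolding eventually_at_top_linorder by blast
  moreover have "n \<ge> N" if "real n > real N + 1" for n
    using that by linarith
  ultimately show ?thesis
    using that[of "real N + 1"] by simp
qed

theorem theorem3: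
  fixes f g h :: "nat \<Rightarrow> complex" and \<alpha> \<beta> \<delta> \<sigma> :: real and k :: nat
  assumes "multiplicative f" and "multiplicative g"
    and "(\<lambda>x. S f x) \<in> O[at_top](\<lambda>x. complex_of_real (x powr \<alpha>))"
    and "k \<ge> 1" and "strongly_pretentious \<beta> k f g"
    and "\<delta> > 0"
    and "(\<lambda>n. norm (f n)) \<in> o(\<lambda>n. real n powr \<delta>)"
    and "(\<lambda>n. norm (g n)) \<in> o(\<lambda>n. real n powr \<delta>)"
    and "\<forall>n>0. g n = dirichlet_conv f h n"
    and "\<sigma> > 1 / real (k + 1) + \<delta>" and "\<sigma> \<ge> max \<alpha> \<beta>"
  shows "\<exists>Y>0. hatH_convergent h Y \<sigma> \<longrightarrow>
           (\<lambda>x. S g x) \<in> O[at_top](\<lambda>x. complex_of_real (x powr \<sigma>))"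
proof -
  have "0 < 1 / real (k + 1)" and "1 / real (k + 1) < \<sigma> - \<delta>"
    using assms(10) by simp_all
  then have "\<delta> < \<sigma>" and exponent: "real (k + 1) * (\<sigma> - \<delta>) > 1"
    by (linarith, simp add: field_simps)
  obtain Y where "Y > 0"
    and large: "\<And>n. real n > Y \<Longrightarrow> norm (f n) \<le> real n powr \<delta> \<and> norm (g n) \<le> real n powr \<delta>"
    and small: "\<And>p. real p > Y \<Longrightarrow> 2 * real p powr (\<delta> - \<sigma>) \<le> 1 / 2"
    using threshold_for_local_bounds[OF assms(7,8) \<open>\<delta> < \<sigma>\<close>] by blast
  have "hatH_convergent h Y \<sigma> \<Longrightarrow> (\<lambda>x. S g x) \<in> O[at_top](\<lambda>x. complex_of_real (x powr \<sigma>))"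
  proof -
    assume "hatH_convergent h Y \<sigma>"
    then obtain B where B: "\<And>N. (\<Sum>n=1..N. norm (h n) / real n powr \<sigma>) \<le> B"
      using bounded_sums_of_hatH_convergent[OF assms(1) multiplicative_dirichlet_quotient[OF assms(1,2,9)]
          assms(9,5) _ _ exponent large small] \<open>\<delta> < \<sigma>\<close> assms(11) by auto
    have "\<alpha> \<le> \<sigma>" and "\<sigma> \<ge> 0"
      using \<open>\<delta> < \<sigma>\<close> assms(6,11) by simp_all
    then obtain C where C: "\<And>y. y \<ge> 1 \<Longrightarrow> norm (S f y) \<le> C * y powr \<sigma>"
      using S_le_powr_of_bigo[OF assms(3)] by blast
    show ?thesis
      using bigo_S_dirichlet_conv[OF assms(9) C B] .
  qed
  then show ?thesis
    using \<open>Y > 0\<close> by blast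
qed

end
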